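(* Let $S\subseteq\mathcal{D}$. If $S$ is $\mathcal{I}$-minimized (resp. $\mathcal{I}$-maximized), then every probability distribution $\lambda$ on $\mathcal{D}$ supported on $S$ satisfies $C_{11}(\lambda)=\underline{C}_{11}(W_\lambda)$ (resp. $C_{11}(\lambda)=\overline{C}_{11}(W_\lambda)$), where $W_\lambda=\sum_D\lambda_DD$. As a consequence, every nonempty subset of $S$ is also $\mathcal{I}$-minimized (resp. $\mathcal{I}$-maximized).
   Context: Channels from $\{1,\dots,m\}$ to $\{1,\dots,n\}$ are $m\times n$ row-stochastic matrices; $\mathcal{D}$ is the set of deterministic (0-1) channels, $\mathrm{rank}(D)$ the matrix rank. For a channel $W$, $\Lambda(W)=\{\lambda\text{ probability distribution on }\mathcal{D}: W=\sum_D\lambda_DD\}$, $C_{11}(\lambda)=\sum_D\lambda_D\log_2\mathrm{rank}(D)$, $\underline{C}_{11}(W)=\inf_{\lambda\in\Lambda(W)}C_{11}(\lambda)$, $\overline{C}_{11}(W)=\sup_{\lambda\in\Lambda(W)}C_{11}(\lambda)$. A subset $S\subseteq\mathcal{D}$ is $\mathcal{I}$-minimized (resp. $\mathcal{I}$-maximized) if there is a probability distribution $\lambda$ on $\mathcal{D}$ with $\mathrm{supp}(\lambda)=S$ and $C_{11}(\lambda)=\underline{C}_{11}(W)$ (resp. $=\overline{C}_{11}(W)$), where $W=\sum_D\lambda_DD$. "Supported on $S$" means $\lambda_D=0$ for $D\notin S$. *)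

theory Defs
  imports "HOL-Analysis.Analysis"
begin

text \<open>Channels from {1..m} to {1..n} are m x n row-stochastic real matrices,
  rendered as elements of type real^'n^'m (rows indexed by 'm, columns by 'n).\<close>

definition deterministic :: "real^'n^'m \<Rightarrow> bool" where
  "deterministic D \<longleftrightarrow> (\<forall>i j. D$i$j = 0 \<or> D$i$j = 1) \<and> (\<forall>i. (\<Sum>j\<in>UNIV. D$i$j) = 1)"

definition Dset :: "(real^'n^'m) set" where
  "Dset = {D. deterministic D}"

definition is_dist :: "(real^'n^'m \<Rightarrow> real) \<Rightarrow> bool" where
  "is_dist lam \<longleftrightarrow> (\<forall>D. 0 \<le> lam D) \<and> (\<forall>D. D \<notin> Dset \<longrightarrow> lam D = 0)
     \<and> (\<Sum>D\<in>Dset. lam D) = 1"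

definition supp :: "(real^'n^'m \<Rightarrow> real) \<Rightarrow> (real^'n^'m) set" where
  "supp lam = {D. lam D \<noteq> 0}"

definition mix :: "(real^'n^'m \<Rightarrow> real) \<Rightarrow> real^'n^'m" where
  "mix lam = (\<Sum>D\<in>Dset. lam D *\<^sub>R D)"

definition C11 :: "(real^'n^'m \<Rightarrow> real) \<Rightarrow> real" where
  "C11 lam = (\<Sum>D\<in>Dset. lam D * log 2 (real (rank D)))"

definition Lambda :: "real^'n^'m \<Rightarrow> (real^'n^'m \<Rightarrow> real) set" where
  "Lambda W = {lam. is_dist lam \<and> mix lam = W}"

definition C11_lower :: "real^'n^'m \<Rightarrow> real" where
  "C11_lower W = (INF lam\<in>Lambda W. C11 lam)"

definition C11_upper :: "real^'n^'m \<Rightarrow> real" where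
  "C11_upper W = (SUP lam\<in>Lambda W. C11 lam)"

definition I_minimized :: "(real^'n^'m) set \<Rightarrow> bool" where
  "I_minimized S \<longleftrightarrow> (\<exists>lam. is_dist lam \<and> supp lam = S \<and> C11 lam = C11_lower (mix lam))"

definition I_maximized :: "(real^'n^'m) set \<Rightarrow> bool" where
  "I_maximized S \<longleftrightarrow> (\<exists>lam. is_dist lam \<and> supp lam = S \<and> C11 lam = C11_upper (mix lam))"

end

theory Submission
  imports Defs
begin

text \<open>If \<open>\<mu>\<close> is optimal and \<open>\<lambda>\<close> is supported inside the support of \<open>\<mu>\<close>, then
  \<open>\<mu> = t\<lambda> + (1 - t)\<nu>\<close> for some \<open>0 < t < 1\<close> and some distribution \<open>\<nu>\<close>. Both \<open>C11\<close> and
  the mixed channel are linear in the distribution, so for any \<open>\<lambda>'\<close> realising the same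
  channel as \<open>\<lambda>\<close>, \<open>t\<lambda>' + (1 - t)\<nu>\<close> realises the same channel as \<open>\<mu>\<close>; optimality of
  \<open>\<mu>\<close> then gives \<open>t C11 \<lambda> \<le> t C11 \<lambda>'\<close> (resp. \<open>\<ge>\<close>). A nonempty subset of \<open>S\<close> is the
  support of its uniform distribution.\<close>

lemma finite_vectors_with_components_in:
  assumes "finite A"
  shows "finite {v :: 'a^'b. \<forall>i. v$i \<in> A}"
proof -
  have "{v :: 'a^'b. \<forall>i. v$i \<in> A} \<subseteq> vec_lambda ` (UNIV \<rightarrow>\<^sub>E A)"
    by (auto intro!: image_eqI[where x="vec_nth _"])
  then show ?thesis
    using assms by (meson finite_PiE finite_imageI finite_subset finite)
qed

lemma finite_Dset: "finite (Dset :: (real^'n^'m) set)"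
proof -
  let ?rows = "{r :: real^'n. \<forall>j. r$j \<in> {0, 1}}"
  have "finite ?rows"
    by (rule finite_vectors_with_components_in) simp
  then have "finite {D :: real^'n^'m. \<forall>i. D$i \<in> ?rows}"
    by (rule finite_vectors_with_components_in)
  moreover have "Dset \<subseteq> {D :: real^'n^'m. \<forall>i. D$i \<in> ?rows}"
    by (auto simp: Dset_def deterministic_def)
  ultimately show ?thesis
    by (rule finite_subset[rotated])
qed

lemma is_dist_le_1:
  assumes "is_dist lam"
  shows "lam D \<le> 1"
proof (cases "D \<in> Dset")
  case True
  then have "lam D \<le> (\<Sum>E\<in>Dset. lam E)"
    using assms finite_Dset by (intro member_le_sum) (auto simp: is_dist_def)
  then show ?thesis
    using assms by (simp add: is_dist_def)
qed (use assms in \<open>simp add: is_dist_def\<close>)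

lemma log2_of_nat_nonneg: "0 \<le> log 2 (real (k::nat))"
  by (cases "k = 0") (auto simp: log_def)

lemma C11_nonneg: "is_dist lam \<Longrightarrow> 0 \<le> C11 lam"
  unfolding C11_def is_dist_def by (intro sum_nonneg mult_nonneg_nonneg) (auto simp: log2_of_nat_nonneg)

lemma C11_le_Max_log_rank:
  fixes lam :: "real^'n^'m \<Rightarrow> real"
  assumes "is_dist lam"
  shows "C11 lam \<le> Max ((\<lambda>D. log 2 (real (rank D))) ` (Dset :: (real^'n^'m) set))"
    (is "_ \<le> ?M")
proof -
  have "C11 lam \<le> (\<Sum>D\<in>Dset. lam D * ?M)"
    unfolding C11_def using assms finite_Dset
    by (intro sum_mono mult_left_mono Max_ge finite_imageI imageI) (auto simp: is_dist_def)
  also have "\<dots> = ?M"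
    using assms by (simp add: sum_distrib_right[symmetric] is_dist_def)
  finally show ?thesis .
qed

lemma C11_convex_comb: "C11 (\<lambda>D. t * f D + s * g D) = t * C11 f + s * C11 g"
  by (simp add: C11_def algebra_simps sum.distrib sum_distrib_left)

lemma mix_convex_comb: "mix (\<lambda>D. t * f D + s * g D) = t *\<^sub>R mix f + s *\<^sub>R mix g"
  by (simp add: mix_def scaleR_add_left scaleR_sum_right sum.distrib)

lemma is_dist_convex_comb:
  assumes "is_dist f" "is_dist g" "0 \<le> t" "t \<le> 1"
  shows "is_dist (\<lambda>D. t * f D + (1 - t) * g D)"
  using assms by (simp add: is_dist_def sum.distrib sum_distrib_left[symmetric])

lemma convex_comb_in_Lambda:
  assumes "lam' \<in> Lambda (mix lam)" "is_dist nu" "0 \<le> t" "t \<le> 1"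
  shows "(\<lambda>D. t * lam' D + (1 - t) * nu D) \<in> Lambda (mix (\<lambda>D. t * lam D + (1 - t) * nu D))"
  using assms by (auto simp: Lambda_def mix_convex_comb intro!: is_dist_convex_comb)

lemma is_dist_split_off:
  assumes mu: "is_dist mu" and lam: "is_dist lam"
    and supported: "\<forall>D. D \<notin> supp mu \<longrightarrow> lam D = 0"
  obtains t nu where "0 < t" "t < 1" "is_dist nu" "mu = (\<lambda>D. t * lam D + (1 - t) * nu D)"
proof -
  have finite_supp: "finite (supp mu)"
    using mu by (intro finite_subset[OF _ finite_Dset]) (auto simp: is_dist_def supp_def)
  have "supp mu \<noteq> {}"
  proof
    assume "supp mu = {}"
    then have "(\<Sum>D\<in>Dset. mu D) = 0"
      by (simp add: supp_def)
    then show False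
      using mu by (simp add: is_dist_def)
  qed
  define m where "m = Min (mu ` supp mu)"
  have m_le: "m \<le> mu D" if "D \<in> supp mu" for D
    using that finite_supp by (simp add: m_def)
  have "0 < m"
    unfolding m_def using finite_supp \<open>supp mu \<noteq> {}\<close> mu
    by (subst Min_gr_iff) (auto simp: supp_def is_dist_def order_le_less)
  moreover have "m \<le> 1"
    using \<open>supp mu \<noteq> {}\<close> m_le is_dist_le_1[OF mu] by (meson all_not_in_conv order_trans)
  ultimately have t: "0 < m / 2" "m / 2 < 1"
    by auto
  have dominated: "m / 2 * lam D \<le> mu D" for D
  proof (cases "D \<in> supp mu")
    case True
    have "m / 2 * lam D \<le> m / 2"
      using \<open>0 < m\<close> is_dist_le_1[OF lam] by (simp add: mult_left_le)
    then show ?thesis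
      using m_le[OF True] \<open>0 < m\<close> by linarith
  qed (use supported mu in \<open>simp add: is_dist_def supp_def\<close>)
  define nu where "nu = (\<lambda>D. (mu D - m / 2 * lam D) / (1 - m / 2))"
  have "(\<Sum>D\<in>Dset. nu D) = ((\<Sum>D\<in>Dset. mu D) - m / 2 * (\<Sum>D\<in>Dset. lam D)) / (1 - m / 2)"
    by (simp add: nu_def sum_divide_distrib[symmetric] sum_subtractf sum_distrib_left)
  also have "\<dots> = 1"
    using mu lam t by (simp add: is_dist_def)
  finally have "is_dist nu"
    using mu lam dominated t by (auto simp: is_dist_def nu_def)
  moreover have "mu = (\<lambda>D. m / 2 * lam D + (1 - m / 2) * nu D)"
    using t by (auto simp: nu_def)
  ultimately show ?thesis
    using t that by blast
qed

lemma C11_eq_C11_lower_iff: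
  assumes "is_dist lam"
  shows "C11 lam = C11_lower (mix lam) \<longleftrightarrow> (\<forall>lam'\<in>Lambda (mix lam). C11 lam \<le> C11 lam')"
proof -
  have bdd: "bdd_below (C11 ` Lambda W)" for W :: "real^'n^'m"
    by (rule bdd_belowI[where m=0]) (auto simp: Lambda_def C11_nonneg)
  have "lam \<in> Lambda (mix lam)"
    using assms by (simp add: Lambda_def)
  then show ?thesis
    unfolding C11_lower_def
    by (auto intro!: order_antisym cINF_lower[OF bdd] cINF_greatest)
qed

lemma C11_eq_C11_upper_iff:
  assumes "is_dist lam"
  shows "C11 lam = C11_upper (mix lam) \<longleftrightarrow> (\<forall>lam'\<in>Lambda (mix lam). C11 lam' \<le> C11 lam)"
proof -
  have bdd: "bdd_above (C11 ` Lambda W)" for W :: "real^'n^'m"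
    by (rule bdd_aboveI) (auto simp: Lambda_def intro: C11_le_Max_log_rank)
  have "lam \<in> Lambda (mix lam)"
    using assms by (simp add: Lambda_def)
  then show ?thesis
    unfolding C11_upper_def
    by (auto intro!: order_antisym cSUP_upper[OF _ bdd] cSUP_least)
qed

lemma C11_lower_of_supported:
  assumes "I_minimized S" "is_dist lam" "\<forall>D. D \<notin> S \<longrightarrow> lam D = 0"
  shows "C11 lam = C11_lower (mix lam)"
proof -
  obtain mu where mu: "is_dist mu" "supp mu = S" "C11 mu = C11_lower (mix mu)"
    using assms(1) by (auto simp: I_minimized_def)
  obtain t nu where t: "0 < t" "t < 1" and "is_dist nu"
    and mu_eq: "mu = (\<lambda>D. t * lam D + (1 - t) * nu D)"
    using is_dist_split_off[OF mu(1) assms(2)] assms(3) mu(2) by blast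
  have "C11 lam \<le> C11 lam'" if "lam' \<in> Lambda (mix lam)" for lam'
  proof -
    have "(\<lambda>D. t * lam' D + (1 - t) * nu D) \<in> Lambda (mix mu)"
      unfolding mu_eq using that \<open>is_dist nu\<close> t by (intro convex_comb_in_Lambda) auto
    then have "C11 mu \<le> t * C11 lam' + (1 - t) * C11 nu"
      using mu C11_eq_C11_lower_iff by (metis C11_convex_comb)
    then show ?thesis
      using t by (simp add: mu_eq C11_convex_comb)
  qed
  then show ?thesis
    using C11_eq_C11_lower_iff[OF assms(2)] by blast
qed

lemma C11_upper_of_supported:
  assumes "I_maximized S" "is_dist lam" "\<forall>D. D \<notin> S \<longrightarrow> lam D = 0"
  shows "C11 lam = C11_upper (mix lam)"
proof -
  obtain mu where mu: "is_dist mu" "supp mu = S" "C11 mu = C11_upper (mix mu)"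
    using assms(1) by (auto simp: I_maximized_def)
  obtain t nu where t: "0 < t" "t < 1" and "is_dist nu"
    and mu_eq: "mu = (\<lambda>D. t * lam D + (1 - t) * nu D)"
    using is_dist_split_off[OF mu(1) assms(2)] assms(3) mu(2) by blast
  have "C11 lam' \<le> C11 lam" if "lam' \<in> Lambda (mix lam)" for lam'
  proof -
    have "(\<lambda>D. t * lam' D + (1 - t) * nu D) \<in> Lambda (mix mu)"
      unfolding mu_eq using that \<open>is_dist nu\<close> t by (intro convex_comb_in_Lambda) auto
    then have "t * C11 lam' + (1 - t) * C11 nu \<le> C11 mu"
      using mu C11_eq_C11_upper_iff by (metis C11_convex_comb)
    then show ?thesis
      using t by (simp add: mu_eq C11_convex_comb)
  qed
  then show ?thesis
    using C11_eq_C11_upper_iff[OF assms(2)] by blast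
qed

definition uniform_dist :: "(real^'n^'m) set \<Rightarrow> real^'n^'m \<Rightarrow> real" where
  "uniform_dist T = (\<lambda>D. if D \<in> T then 1 / real (card T) else 0)"

lemma
  assumes "T \<subseteq> Dset" "T \<noteq> {}"
  shows is_dist_uniform_dist: "is_dist (uniform_dist T)"
    and supp_uniform_dist: "supp (uniform_dist T) = T"
proof -
  have "card T > 0"
    using assms finite_Dset by (meson card_gt_0_iff finite_subset)
  have "(\<Sum>D\<in>Dset. uniform_dist T D) = (\<Sum>D\<in>T. 1 / real (card T))"
    unfolding uniform_dist_def using assms(1) finite_Dset by (intro sum.mono_neutral_cong_right) auto
  also have "\<dots> = 1"
    using \<open>card T > 0\<close> by simp
  finally show "is_dist (uniform_dist T)" "supp (uniform_dist T) = T"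
    using assms \<open>card T > 0\<close> by (auto simp: is_dist_def supp_def uniform_dist_def)
qed

lemma uniform_dist_supported: "D \<notin> S \<Longrightarrow> T \<subseteq> S \<Longrightarrow> uniform_dist T D = 0"
  by (auto simp: uniform_dist_def)

theorem proposition3:
  fixes S :: "(real^'n^'m) set"
  assumes "S \<subseteq> Dset"
  shows "(I_minimized S \<longrightarrow>
            (\<forall>lam. is_dist lam \<and> (\<forall>D. D \<notin> S \<longrightarrow> lam D = 0) \<longrightarrow> C11 lam = C11_lower (mix lam))
          \<and> (\<forall>T. T \<subseteq> S \<and> T \<noteq> {} \<longrightarrow> I_minimized T))
       \<and> (I_maximized S \<longrightarrow>
            (\<forall>lam. is_dist lam \<and> (\<forall>D. D \<notin> S \<longrightarrow> lam D = 0) \<longrightarrow> C11 lam = C11_upper (mix lam))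
          \<and> (\<forall>T. T \<subseteq> S \<and> T \<noteq> {} \<longrightarrow> I_maximized T))"
proof (intro conjI impI allI)
  fix T assume "I_minimized S" and T: "T \<subseteq> S \<and> T \<noteq> {}"
  then have "C11 (uniform_dist T) = C11_lower (mix (uniform_dist T))"
    using assms by (metis C11_lower_of_supported is_dist_uniform_dist uniform_dist_supported order_trans)
  then show "I_minimized T"
    using T assms unfolding I_minimized_def by (meson is_dist_uniform_dist supp_uniform_dist order_trans)
next
  fix T assume "I_maximized S" and T: "T \<subseteq> S \<and> T \<noteq> {}"
  then have "C11 (uniform_dist T) = C11_upper (mix (uniform_dist T))"
    using assms by (metis C11_upper_of_supported is_dist_uniform_dist uniform_dist_supported order_trans)
  then show "I_maximized T"
    using T assms unfolding I_maximized_def by (meson is_dist_uniform_dist supp_uniform_dist order_trans)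
qed (use C11_lower_of_supported C11_upper_of_supported in blast)+

end
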